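(* Let $T$ be a measurable transformation of a space $X$ preserving a probability measure $\mu$, let $f:X\to\mathbb R$ be measurable, and let $n>0$ be an integer. Then $f$ is aperiodic for $T$ if and only if $S_nf=\sum_{k=0}^{n-1}f\circ T^k$ is aperiodic for $T^n$.
   Context: A measurable $g:X\to\mathbb R$ is called periodic for a $\mu$-preserving map $S$ if there exist $c\neq 0$, $d\in\mathbb R$ and a measurable $u:X\to\mathbb R$ such that $g=u-u\circ S+d \bmod c$ $\mu$-almost everywhere; it is aperiodic for $S$ if it is not periodic, i.e. for every measurable $u$ and every $\lambda\ne0$, $g-u+u\circ S\bmod\lambda$ is not $\mu$-a.e. constant. *)

theory Defs
  imports "HOL-Probability.Probability"
begin

definition measure_preserving_map :: "'a measure \<Rightarrow> ('a \<Rightarrow> 'a) \<Rightarrow> bool" where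
  "measure_preserving_map M T \<longleftrightarrow> T \<in> measurable M M \<and> distr M M T = M"

definition periodic_for :: "'a measure \<Rightarrow> ('a \<Rightarrow> 'a) \<Rightarrow> ('a \<Rightarrow> real) \<Rightarrow> bool" where
  "periodic_for M S g \<longleftrightarrow>
     (\<exists>c d u. c \<noteq> (0::real) \<and> u \<in> borel_measurable M \<and>
        (AE x in M. \<exists>k::int. g x - (u x - u (S x) + d) = of_int k * c))"

definition aperiodic_for :: "'a measure \<Rightarrow> ('a \<Rightarrow> 'a) \<Rightarrow> ('a \<Rightarrow> real) \<Rightarrow> bool" where
  "aperiodic_for M S g \<longleftrightarrow> \<not> periodic_for M S g"

definition birkhoff_sum :: "('a \<Rightarrow> 'a) \<Rightarrow> nat \<Rightarrow> ('a \<Rightarrow> real) \<Rightarrow> 'a \<Rightarrow> real" where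
  "birkhoff_sum T n f x = (\<Sum>k<n. f ((T ^^ k) x))"

end

theory Submission
  imports Defs
begin

text \<open>If f = u - u o T + d + k c with k integer-valued, then summing along an orbit
  telescopes: S_n f = u - u o T^n + n d + k' c, so S_n f is periodic for T^n. Conversely, if
  S_n f = v - v o T^n + d + k c, then w = (1/n) sum_{j<n} (S_j f + v o T^j) satisfies
  w - w o T = f - (S_n f - v + v o T^n)/n, so f is periodic for T with the constants d/n and
  c/n. Only the first direction uses that T preserves the measure (to move almost-everywhere
  statements along orbits); neither uses that the measure is finite.\<close>

lemma measure_preserving_map_funpow:
  assumes "measure_preserving_map M T"
  shows "measure_preserving_map M (T ^^ j)"
proof (induction j)
  case 0
  show ?case by (simp add: measure_preserving_map_def)
next
  case (Suc j)
  have T: "T \<in> measurable M M" and distr_T: "distr M M T = M"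
    using assms by (auto simp: measure_preserving_map_def)
  have "distr M M (T ^^ Suc j) = distr (distr M M (T ^^ j)) M T"
    using T by (simp add: distr_distr measurable_compose_n)
  also have "\<dots> = M"
    using Suc distr_T by (simp add: measure_preserving_map_def)
  finally show ?case
    using T measurable_compose_n unfolding measure_preserving_map_def by blast
qed

lemma AE_measure_preserving_map:
  assumes "measure_preserving_map M T" and "AE x in M. P x"
  shows "AE x in M. P (T x)"
proof (rule AE_distrD[of T M M])
  show T: "T \<in> measurable M M"
    using assms(1) by (simp add: measure_preserving_map_def)
  have "distr M M T = M"
    using assms(1) by (simp add: measure_preserving_map_def)
  then show "AE x in distr M M T. P x"
    using assms(2) by (rule ssubst)
qed

lemma borel_measurable_birkhoff_sum:
  assumes "T \<in> measurable M M" and "f \<in> borel_measurable M"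
  shows "birkhoff_sum T n f \<in> borel_measurable M"
  unfolding birkhoff_sum_def[abs_def]
  using assms by (auto intro: measurable_compose measurable_compose_n)

lemma birkhoff_sum_Suc: "birkhoff_sum T (Suc n) f x = f x + birkhoff_sum T n f (T x)"
  unfolding birkhoff_sum_def sum.lessThan_Suc_shift
  by (simp add: funpow_Suc_right del: funpow.simps)

lemma birkhoff_sum_cong:
  assumes "\<And>j. j < n \<Longrightarrow> f ((T ^^ j) x) = g ((T ^^ j) x)"
  shows "birkhoff_sum T n f x = birkhoff_sum T n g x"
  unfolding birkhoff_sum_def using assms by simp

lemma birkhoff_sum_coboundary:
  "birkhoff_sum T n (\<lambda>y. u y - u (T y) + d + of_int (k y) * c) x =
     u x - u ((T ^^ n) x) + real n * d + of_int (\<Sum>j<n. k ((T ^^ j) x)) * c"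
proof -
  have "(\<Sum>j<n. u ((T ^^ j) x) - u ((T ^^ Suc j) x)) = u x - u ((T ^^ n) x)"
    using sum_lessThan_telescope'[of "\<lambda>j. u ((T ^^ j) x)" n] by simp
  then show ?thesis
    unfolding birkhoff_sum_def by (simp add: sum.distrib sum_distrib_right)
qed

lemma birkhoff_sum_transfer_function:
  fixes v :: "'a \<Rightarrow> real"
  shows "(\<Sum>j<n. birkhoff_sum T j f x + v ((T ^^ j) x))
           - (\<Sum>j<n. birkhoff_sum T j f (T x) + v ((T ^^ j) (T x)))
         = real n * f x - (birkhoff_sum T n f x - (v x - v ((T ^^ n) x)))"
    (is "?w x - ?w (T x) = _")
proof -
  let ?G = "\<lambda>j. birkhoff_sum T j f x + v ((T ^^ j) x)"
  have shift: "birkhoff_sum T j f (T x) + v ((T ^^ j) (T x)) = ?G (Suc j) - f x" for j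
    by (simp add: birkhoff_sum_Suc funpow_Suc_right del: funpow.simps)
  have "?w x - ?w (T x) = (\<Sum>j<n. ?G j - ?G (Suc j)) + real n * f x"
    unfolding shift by (simp add: sum_subtractf)
  also have "(\<Sum>j<n. ?G j - ?G (Suc j)) = ?G 0 - ?G n"
    by (rule sum_lessThan_telescope')
  finally show ?thesis
    by (simp add: birkhoff_sum_def)
qed

lemma periodic_for_iff:
  "periodic_for M S g \<longleftrightarrow>
     (\<exists>c d u k. c \<noteq> 0 \<and> u \<in> borel_measurable M \<and>
        (AE x in M. g x = u x - u (S x) + d + of_int (k x) * c))"
proof
  assume "periodic_for M S g"
  then obtain c d u where "c \<noteq> 0" and "u \<in> borel_measurable M"
    and AE: "AE x in M. \<exists>k::int. g x - (u x - u (S x) + d) = of_int k * c"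
    unfolding periodic_for_def by blast
  define k where "k x = (SOME k::int. g x - (u x - u (S x) + d) = of_int k * c)" for x
  have "AE x in M. g x = u x - u (S x) + d + of_int (k x) * c"
    using AE
  proof eventually_elim
    case (elim x)
    then have "g x - (u x - u (S x) + d) = of_int (k x) * c"
      unfolding k_def by (rule someI_ex)
    then show ?case
      by simp
  qed
  with \<open>c \<noteq> 0\<close> \<open>u \<in> borel_measurable M\<close> show "\<exists>c d u k. c \<noteq> 0 \<and> u \<in> borel_measurable M \<and>
      (AE x in M. g x = u x - u (S x) + d + of_int (k x) * c)"
    by blast
next
  assume "\<exists>c d u k. c \<noteq> 0 \<and> u \<in> borel_measurable M \<and>
      (AE x in M. g x = u x - u (S x) + d + of_int (k x) * c)"
  then obtain c d u k where "c \<noteq> 0" and "u \<in> borel_measurable M"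
    and AE: "AE x in M. g x = u x - u (S x) + d + of_int (k x) * c"
    by blast
  from AE have "AE x in M. \<exists>k::int. g x - (u x - u (S x) + d) = of_int k * c"
    by eventually_elim simp
  with \<open>c \<noteq> 0\<close> \<open>u \<in> borel_measurable M\<close> show "periodic_for M S g"
    unfolding periodic_for_def by blast
qed

lemma periodic_for_birkhoff_sum:
  assumes "measure_preserving_map M T" and "periodic_for M T f"
  shows "periodic_for M (T ^^ n) (birkhoff_sum T n f)"
proof -
  obtain c d u k where "c \<noteq> 0" and "u \<in> borel_measurable M"
    and AE: "AE x in M. f x = u x - u (T x) + d + of_int (k x) * c"
    using assms(2) unfolding periodic_for_iff by blast
  have AE_orbit: "AE x in M. \<forall>j. f ((T ^^ j) x) =
      u ((T ^^ j) x) - u (T ((T ^^ j) x)) + d + of_int (k ((T ^^ j) x)) * c"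
    unfolding AE_all_countable
  proof
    fix j
    show "AE x in M. f ((T ^^ j) x) =
        u ((T ^^ j) x) - u (T ((T ^^ j) x)) + d + of_int (k ((T ^^ j) x)) * c"
      using AE_measure_preserving_map[OF measure_preserving_map_funpow[OF assms(1)] AE] .
  qed
  define K where "K x = (\<Sum>j<n. k ((T ^^ j) x))" for x
  have "AE x in M. birkhoff_sum T n f x = u x - u ((T ^^ n) x) + real n * d + of_int (K x) * c"
    using AE_orbit
  proof eventually_elim
    case (elim x)
    then have "birkhoff_sum T n f x =
        birkhoff_sum T n (\<lambda>y. u y - u (T y) + d + of_int (k y) * c) x"
      by (intro birkhoff_sum_cong) blast
    then show ?case
      unfolding K_def by (simp only: birkhoff_sum_coboundary)
  qed
  with \<open>c \<noteq> 0\<close> \<open>u \<in> borel_measurable M\<close> show ?thesis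
    unfolding periodic_for_iff by blast
qed

lemma periodic_for_of_birkhoff_sum:
  assumes T: "T \<in> measurable M M" and f: "f \<in> borel_measurable M" and "n > 0"
    and "periodic_for M (T ^^ n) (birkhoff_sum T n f)"
  shows "periodic_for M T f"
proof -
  obtain c d v k where "c \<noteq> 0" and v: "v \<in> borel_measurable M"
    and AE: "AE x in M. birkhoff_sum T n f x = v x - v ((T ^^ n) x) + d + of_int (k x) * c"
    using assms(4) unfolding periodic_for_iff by blast
  define u where "u y = (\<Sum>j<n. birkhoff_sum T j f y + v ((T ^^ j) y)) / real n" for y
  have "u \<in> borel_measurable M"
    unfolding u_def using borel_measurable_birkhoff_sum[OF T f] v measurable_compose_n[OF T]
    by (auto intro!: borel_measurable_divide borel_measurable_sum intro: measurable_compose)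
  moreover have "AE x in M. f x = u x - u (T x) + d / real n + of_int (k x) * (c / real n)"
    using AE
  proof eventually_elim
    case (elim x)
    let ?w = "\<lambda>y. \<Sum>j<n. birkhoff_sum T j f y + v ((T ^^ j) y)"
    have "u x - u (T x) = (?w x - ?w (T x)) / real n"
      by (simp add: u_def diff_divide_distrib)
    also have "\<dots> = (real n * f x - (d + of_int (k x) * c)) / real n"
      using birkhoff_sum_transfer_function[where n = n and T = T and f = f and v = v and x = x] elim
      by simp
    also have "\<dots> = f x - (d / real n + of_int (k x) * (c / real n))"
      using \<open>n > 0\<close> by (simp add: field_simps)
    finally show ?case
      by simp
  qed
  moreover have "c / real n \<noteq> 0"
    using \<open>c \<noteq> 0\<close> \<open>n > 0\<close> by simp
  ultimately show ?thesis
    unfolding periodic_for_iff by blast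
qed

theorem lemma2p1:
  fixes M :: "'a measure" and T :: "'a \<Rightarrow> 'a" and f :: "'a \<Rightarrow> real" and n :: nat
  assumes "prob_space M"
    and "measure_preserving_map M T"
    and "f \<in> borel_measurable M"
    and "n > 0"
  shows "aperiodic_for M T f \<longleftrightarrow> aperiodic_for M (T ^^ n) (birkhoff_sum T n f)"
proof -
  have T: "T \<in> measurable M M"
    using assms(2) by (simp add: measure_preserving_map_def)
  have "periodic_for M T f \<longleftrightarrow> periodic_for M (T ^^ n) (birkhoff_sum T n f)"
  proof
    show "periodic_for M T f \<Longrightarrow> periodic_for M (T ^^ n) (birkhoff_sum T n f)"
      by (rule periodic_for_birkhoff_sum[OF assms(2)])
    show "periodic_for M (T ^^ n) (birkhoff_sum T n f) \<Longrightarrow> periodic_for M T f"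
      by (rule periodic_for_of_birkhoff_sum[OF T assms(3,4)])
  qed
  then show ?thesis
    unfolding aperiodic_for_def by simp
qed

end
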